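(* Consider the equation $\partial_t u = i\partial_x^2 u + u\,\partial_x u$ on $\mathbb{R}\times\mathbb{T}$, $\mathbb{T}=\mathbb{R}/(2\pi\mathbb{Z})$. There exist a mean-zero function $\phi\in L^2_0(\mathbb{T})$ and $t_*>0$ such that the corresponding solution $u$ on the time interval $[0,t_* )$ with $u|_{t=0}=\phi$ satisfies $$\lim_{t\to t_*-}\|u(t)\|_{L^p(\mathbb{T})}=\infty\quad\text{for every }1\le p\le\infty.$$ In particular, $\lim_{t\to t_*-}\|u(t)\|_{\mathcal{F}L_0^{s,p}(\mathbb{T})}=\infty$ for every $(s,p)$ with either $s>\frac12-\frac1p$, $p>2$, or $s\ge0$, $p=2$.
   Context: $L^2_0(\mathbb{T})$ denotes mean-zero $L^2$ functions. For $f$ on $\mathbb{T}$, $f_k=\frac1{2\pi}\int_{\mathbb{T}}f(x)e^{-ikx}dx$, $\mathbb{Z}_0=\mathbb{Z}\setminus\{0\}$, and $\mathcal{F}L_0^{s,p}(\mathbb{T})$ is the space of mean-zero functions with norm $\|f\|_{\mathcal{F}L_0^{s,p}}=\||k|^sf_k\|_{\ell^p(\mathbb{Z}_0)}$. *)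

theory Defs
  imports "HOL-Probability.Probability"
begin

text \<open>Functions on the torus T = R/(2 pi Z) are represented as 2pi-periodic functions
  real => complex. Integrals over T are Lebesgue integrals over [0, 2 pi].\<close>

definition periodic2pi :: "(real \<Rightarrow> complex) \<Rightarrow> bool" where
  "periodic2pi f \<longleftrightarrow> (\<forall>x. f (x + 2 * pi) = f x)"

definition fourier_coeff :: "(real \<Rightarrow> complex) \<Rightarrow> int \<Rightarrow> complex" where
  "fourier_coeff f k =
     complex_of_real (1 / (2 * pi)) *
       (LINT x:{0..2*pi}|lborel. f x * exp (- (\<i> * of_int k * of_real x)))"

definition L2_norm :: "(real \<Rightarrow> complex) \<Rightarrow> real" where
  "L2_norm f = sqrt (LINT x:{0..2*pi}|lborel. (norm (f x))^2)"

definition L2_0 :: "(real \<Rightarrow> complex) set" where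
  "L2_0 = {f. f \<in> borel_measurable lborel \<and> periodic2pi f \<and>
              set_integrable lborel {0..2*pi} (\<lambda>x. (norm (f x))^2) \<and>
              fourier_coeff f 0 = 0}"

definition Lp_norm :: "ereal \<Rightarrow> (real \<Rightarrow> complex) \<Rightarrow> ereal" where
  "Lp_norm p f =
     (if p = \<infinity> then esssup (restrict_space lborel {0..2*pi}) (\<lambda>x. ereal (norm (f x)))
      else (let I = (\<integral>\<^sup>+ x. ennreal (norm (f x) powr real_of_ereal p)
                          * indicator {0..2*pi} x \<partial>lborel)
            in if I = \<infinity> then \<infinity> else ereal (enn2real I powr (1 / real_of_ereal p))))"

definition FL_norm :: "real \<Rightarrow> ereal \<Rightarrow> (real \<Rightarrow> complex) \<Rightarrow> ereal" where
  "FL_norm s p f =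
     (if p = \<infinity> then (SUP k\<in>(UNIV - {0::int}). ereal (\<bar>real_of_int k\<bar> powr s * norm (fourier_coeff f k)))
      else (let I = (\<integral>\<^sup>+ k. ennreal ((\<bar>real_of_int k\<bar> powr s * norm (fourier_coeff f k))
                                   powr real_of_ereal p) \<partial>count_space (UNIV - {0::int}))
            in if I = \<infinity> then \<infinity> else ereal (enn2real I powr (1 / real_of_ereal p))))"

text \<open>u (time, space) is a solution on [0,T) of  u_t = i u_xx + u u_x  with u(0) = phi,
  in the sense: u in C([0,T); L^2_0(T)) and the equation holds in the (distributional)
  Fourier-coefficient form
    d/dt u_k = - i k^2 u_k + (i k / 2) sum_m u_m u_{k-m}
  (using u u_x = (1/2) d_x (u^2)).\<close>
definition is_solution :: "(real \<Rightarrow> real \<Rightarrow> complex) \<Rightarrow> (real \<Rightarrow> complex) \<Rightarrow> real \<Rightarrow> bool" where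
  "is_solution u \<phi> T \<longleftrightarrow>
     u 0 = \<phi> \<and>
     (\<forall>t\<in>{0..<T}. u t \<in> L2_0) \<and>
     (\<forall>t\<in>{0..<T}. ((\<lambda>\<tau>. L2_norm (\<lambda>x. u \<tau> x - u t x)) \<longlongrightarrow> 0) (at t within {0..<T})) \<and>
     (\<forall>k::int. \<forall>t\<in>{0..<T}.
        ((\<lambda>\<tau>. fourier_coeff (u \<tau>) k) has_vector_derivative
           (- (\<i> * of_int (k^2)) * fourier_coeff (u t) k
            + (\<i> * of_int k / 2) * (\<Sum>\<^sub>\<infinity>m::int. fourier_coeff (u t) m * fourier_coeff (u t) (k - m))))
        (at t within {0..<T}))"

end

theory Submission
  imports Defs
begin

text \<open>For \<open>|q| < 1\<close> the function \<open>F\<^sub>q(x) = q e\<^sup>i\<^sup>x / (1 - q e\<^sup>i\<^sup>x) = \<Sum>\<^sub>k\<^sub>\<ge>\<^sub>1 q\<^sup>k e\<^sup>i\<^sup>k\<^sup>x\<close> has a single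
  pole, at \<open>e\<^sup>i\<^sup>x = 1/q\<close>. The sum \<open>u = 2 F\<^sub>a + 2 F\<^sub>b\<close> has Fourier coefficients \<open>2 (a\<^sup>k + b\<^sup>k)\<close>, and these
  solve the Fourier form of the equation exactly when the poles move by
  \<open>a' = \<i> a (a - 3b) / (b - a)\<close>, \<open>b' = \<i> b (b - 3a) / (a - b)\<close>. This system has a closed-form
  solution with both poles inside the unit disc for \<open>0 \<le> t < \<pi>/2\<close>, \<open>a(\<pi>/2) = -\<i>/10\<close> and
  \<open>b(\<pi>/2) = \<i>\<close>. As \<open>t \<rightarrow> \<pi>/2\<close> every Fourier coefficient of \<open>u(t)\<close> tends to a number of modulus at
  least 1, so all the Fourier-Lebesgue norms blow up; and \<open>u(t)\<close> converges pointwise to a profile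
  of size \<open>1 / (x - 3\<pi>/2)\<close> to the right of \<open>3\<pi>/2\<close>, which by Fatou's lemma makes every \<open>L\<^sup>p\<close> norm
  blow up.\<close>

definition geom_kernel :: "complex \<Rightarrow> real \<Rightarrow> complex" where
  "geom_kernel q x = q * exp (\<i> * of_real x) / (1 - q * exp (\<i> * of_real x))"

lemma norm_geom_kernel_denom_ge: "1 - norm q \<le> norm (1 - q * exp (\<i> * of_real x))"
  using norm_triangle_ineq2[of 1 "q * exp (\<i> * of_real x)"] by (simp add: norm_mult)

lemma geom_kernel_denom_nonzero: "norm q < 1 \<Longrightarrow> 1 - q * exp (\<i> * of_real x) \<noteq> 0"
  using norm_geom_kernel_denom_ge[of q x] by auto

lemma continuous_on_geom_kernel: "norm q < 1 \<Longrightarrow> continuous_on S (geom_kernel q)"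
  unfolding geom_kernel_def[abs_def]
  by (intro continuous_intros) (auto dest: geom_kernel_denom_nonzero)

lemma norm_geom_kernel_le: "norm q < 1 \<Longrightarrow> norm (geom_kernel q x) \<le> norm q / (1 - norm q)"
  using norm_geom_kernel_denom_ge[of q x]
  by (simp add: geom_kernel_def norm_divide norm_mult frac_le)

lemma norm_geom_kernel_diff_le:
  assumes p: "norm p < 1" and q: "norm q < 1"
  shows "norm (geom_kernel p x - geom_kernel q x) \<le> norm (p - q) / ((1 - norm p) * (1 - norm q))"
proof -
  let ?z = "exp (\<i> * of_real x)"
  have "geom_kernel p x - geom_kernel q x = (p - q) * ?z / ((1 - p * ?z) * (1 - q * ?z))"
    unfolding geom_kernel_def using geom_kernel_denom_nonzero[OF p] geom_kernel_denom_nonzero[OF q]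
    by (simp add: field_simps)
  then have "norm (geom_kernel p x - geom_kernel q x) = norm (p - q) / (norm (1 - p * ?z) * norm (1 - q * ?z))"
    by (simp add: norm_mult norm_divide)
  also have "\<dots> \<le> norm (p - q) / ((1 - norm p) * (1 - norm q))"
    by (rule divide_left_mono)
       (use p q norm_geom_kernel_denom_ge[of p x] norm_geom_kernel_denom_ge[of q x]
        in \<open>auto intro!: mult_mono mult_pos_pos\<close>)
  finally show ?thesis .
qed

lemma set_integral_exp_int_freq:
  "(LINT x:{0..2*pi}|lborel. exp (\<i> * of_int j * of_real x)) = (if j = 0 then 2*pi else 0)"
proof (cases "j = 0")
  case True
  then show ?thesis by (simp add: set_lebesgue_integral_def scaleR_conv_of_real)
next
  case False
  have period: "exp (\<i> * of_int j * of_real (2*pi)) = 1"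
    using cis_conv_exp[of "2 * pi * of_int j"] by (simp add: mult_ac)
  have "(LINT x:{0..2*pi}|lborel. exp (\<i> * of_int j * of_real x))
      = (LBINT x=ereal 0..ereal (2*pi). exp (\<i> * of_int j * of_real x))"
    using interval_integral_Icc[of 0 "2*pi" "\<lambda>x. exp (\<i> * of_int j * of_real x)"] by simp
  also have "\<dots> = exp (\<i> * of_int j * of_real (2*pi)) / (\<i> * of_int j) - exp (\<i> * of_int j * of_real 0) / (\<i> * of_int j)"
    by (rule interval_integral_FTC_finite)
       (use False in \<open>auto intro!: continuous_intros derivative_eq_intros has_vector_derivative_real_field
                        simp: field_simps\<close>)
  also have "\<dots> = 0" by (simp only: period) simp
  finally show ?thesis using False by simp
qed

lemma geom_kernel_mult_exp_sums:
  assumes "norm q < 1"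
  shows "(\<lambda>n. q^(n+1) * exp (\<i> * of_int (int n + 1 - k) * of_real x)) sums
           (geom_kernel q x * exp (- (\<i> * of_int k * of_real x)))"
proof -
  let ?z = "q * exp (\<i> * of_real x)" and ?e = "exp (- (\<i> * of_int k * of_real x))"
  have "norm ?z < 1" using assms by (simp add: norm_mult)
  then have "(\<lambda>n. (?z * ?e) * ?z^n) sums ((?z * ?e) * (1 / (1 - ?z)))"
    by (intro sums_mult geometric_sums)
  moreover have "(?z * ?e) * ?z^n = q^(n+1) * exp (\<i> * of_int (int n + 1 - k) * of_real x)" for n
  proof -
    have "exp (\<i> * of_int (int n + 1 - k) * of_real x) = exp (\<i> * of_real x) ^ (n+1) * ?e"
      by (simp add: exp_of_nat_mult[symmetric] exp_add[symmetric] algebra_simps)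
    then show ?thesis by (simp add: power_mult_distrib algebra_simps)
  qed
  ultimately show ?thesis by (simp add: geom_kernel_def)
qed

lemma set_integral_geom_kernel_mult_exp:
  assumes q: "norm q < 1"
  shows "(LINT x:{0..2*pi}|lborel. geom_kernel q x * exp (- (\<i> * of_int k * of_real x)))
       = (\<Sum>n. q^(n+1) * (LINT x:{0..2*pi}|lborel. exp (\<i> * of_int (int n + 1 - k) * of_real x)))"
proof -
  define f where "f n x = indicator {0..2*pi} x *\<^sub>R (q^(n+1) * exp (\<i> * of_int (int n + 1 - k) * of_real x))" for n x
  have norm_f: "norm (f n x) = indicator {0..2*pi} x * norm q ^ (n+1)" for n x
    by (simp add: f_def norm_mult norm_power indicator_def)
  have summable_geom: "summable (\<lambda>n. norm q ^ (n+1) * c)" for c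
    using q by (intro summable_mult2) (simp add: power_Suc2 summable_geometric)
  have "indicator {0..2*pi} x *\<^sub>R (geom_kernel q x * exp (- (\<i> * of_int k * of_real x))) = (\<Sum>n. f n x)" for x
    using sums_scaleR_right[OF geom_kernel_mult_exp_sums[OF q]] by (simp add: f_def sums_iff)
  then have "(LINT x:{0..2*pi}|lborel. geom_kernel q x * exp (- (\<i> * of_int k * of_real x)))
      = (\<integral>x. (\<Sum>n. f n x) \<partial>lborel)"
    by (simp add: set_lebesgue_integral_def)
  also have "\<dots> = (\<Sum>n. integral\<^sup>L lborel (f n))"
  proof (rule integral_suminf)
    show "integrable lborel (f n)" for n
      unfolding f_def by (rule borel_integrable_compact) (auto intro!: continuous_intros)
    show "AE x in lborel. summable (\<lambda>n. norm (f n x))"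
      unfolding norm_f by (intro AE_I2) (simp only: mult.commute[of "indicator _ _"] summable_geom)
    show "summable (\<lambda>n. \<integral>x. norm (f n x) \<partial>lborel)"
      unfolding norm_f using q by (simp add: summable_geom)
  qed
  also have "\<dots> = (\<Sum>n. q^(n+1) * (LINT x:{0..2*pi}|lborel. exp (\<i> * of_int (int n + 1 - k) * of_real x)))"
    unfolding f_def set_lebesgue_integral_def
    by (simp add: scaleR_conv_of_real mult_ac del: of_int_diff of_int_add)
  finally show ?thesis .
qed

lemma fourier_coeff_geom_kernel:
  assumes q: "norm q < 1"
  shows "fourier_coeff (geom_kernel q) k = (if k \<ge> 1 then q ^ nat k else 0)"
proof -
  have "(LINT x:{0..2*pi}|lborel. geom_kernel q x * exp (- (\<i> * of_int k * of_real x)))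
      = (\<Sum>n. q^(n+1) * (if int n + 1 - k = 0 then 2*pi else 0))"
    unfolding set_integral_geom_kernel_mult_exp[OF q] by (simp only: set_integral_exp_int_freq)
  also have "\<dots> = (\<Sum>n. if n = nat (k-1) \<and> k \<ge> 1 then 2 * pi * q^(n+1) else 0)"
    by (intro suminf_cong) auto
  also have "\<dots> = (if k \<ge> 1 then 2 * pi * q ^ nat k else 0)"
    using sums_single[of "nat (k-1)" "\<lambda>n. 2 * pi * q^(n+1)"]
    by (auto simp: sums_iff Suc_nat_eq_nat_zadd1 simp flip: power_Suc)
  finally show ?thesis unfolding fourier_coeff_def by simp
qed

lemma fourier_coeff_lincomb:
  assumes "continuous_on {0..2*pi} f" "continuous_on {0..2*pi} g"
  shows "fourier_coeff (\<lambda>x. c * f x + d * g x) k = c * fourier_coeff f k + d * fourier_coeff g k"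
proof -
  let ?e = "\<lambda>x. exp (- (\<i> * of_int k * of_real x))"
  have "set_integrable lborel {0..2*pi} (\<lambda>x. h x * ?e x)" if "continuous_on {0..2*pi} h" for h
    unfolding set_integrable_def by (rule borel_integrable_compact) (auto intro!: continuous_intros that)
  then have "(LINT x:{0..2*pi}|lborel. c * (f x * ?e x) + d * (g x * ?e x))
      = c * (LINT x:{0..2*pi}|lborel. f x * ?e x) + d * (LINT x:{0..2*pi}|lborel. g x * ?e x)"
    using assms by (simp add: set_integral_add set_integral_mult_right set_integrable_mult_right)
  then show ?thesis unfolding fourier_coeff_def by (simp add: algebra_simps)
qed

definition two_pole :: "complex \<Rightarrow> complex \<Rightarrow> real \<Rightarrow> complex" where
  "two_pole a b x = 2 * geom_kernel a x + 2 * geom_kernel b x"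

definition two_pole_coeff :: "complex \<Rightarrow> complex \<Rightarrow> int \<Rightarrow> complex" where
  "two_pole_coeff a b k = (if k \<ge> 1 then 2 * (a ^ nat k + b ^ nat k) else 0)"

lemma continuous_on_two_pole: "norm a < 1 \<Longrightarrow> norm b < 1 \<Longrightarrow> continuous_on S (two_pole a b)"
  unfolding two_pole_def[abs_def] by (intro continuous_intros continuous_on_geom_kernel)

lemma fourier_coeff_two_pole:
  assumes "norm a < 1" "norm b < 1"
  shows "fourier_coeff (two_pole a b) = two_pole_coeff a b"
proof
  fix k
  have "fourier_coeff (two_pole a b) k = 2 * fourier_coeff (geom_kernel a) k + 2 * fourier_coeff (geom_kernel b) k"
    unfolding two_pole_def[abs_def] using assms
    by (intro fourier_coeff_lincomb continuous_on_geom_kernel)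
  then show "fourier_coeff (two_pole a b) k = two_pole_coeff a b k"
    using assms by (simp add: fourier_coeff_geom_kernel two_pole_coeff_def algebra_simps)
qed

lemma two_pole_in_L2_0:
  assumes "norm a < 1" "norm b < 1"
  shows "two_pole a b \<in> L2_0"
proof -
  have cont: "continuous_on S (two_pole a b)" for S
    using assms by (rule continuous_on_two_pole)
  have "periodic2pi (two_pole a b)"
    by (simp add: periodic2pi_def two_pole_def geom_kernel_def algebra_simps exp_add)
  moreover have "two_pole a b \<in> borel_measurable lborel"
    using cont[of UNIV] by (simp add: borel_measurable_continuous_onI measurable_lborel1)
  moreover have "set_integrable lborel {0..2*pi} (\<lambda>x. (norm (two_pole a b x))^2)"
    unfolding set_integrable_def by (rule borel_integrable_compact) (auto intro!: continuous_intros cont)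
  ultimately show ?thesis
    using assms by (simp add: L2_0_def fourier_coeff_two_pole two_pole_coeff_def)
qed

lemma L2_norm_two_pole_diff_le:
  assumes a: "norm a < 1" "norm a' < 1" and b: "norm b < 1" "norm b' < 1"
  shows "L2_norm (\<lambda>x. two_pole a b x - two_pole a' b' x)
           \<le> sqrt (2*pi) * (2 * norm (a - a') / ((1 - norm a) * (1 - norm a'))
                            + 2 * norm (b - b') / ((1 - norm b) * (1 - norm b')))"
    (is "_ \<le> sqrt (2*pi) * ?D")
proof -
  have D_nonneg: "?D \<ge> 0" using a b by (auto intro!: add_nonneg_nonneg divide_nonneg_nonneg)
  have pointwise: "(norm (two_pole a b x - two_pole a' b' x))^2 \<le> ?D^2" for x
  proof -
    have "two_pole a b x - two_pole a' b' x
        = 2 * (geom_kernel a x - geom_kernel a' x) + 2 * (geom_kernel b x - geom_kernel b' x)"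
      by (simp add: two_pole_def algebra_simps)
    then have "norm (two_pole a b x - two_pole a' b' x)
        \<le> 2 * norm (geom_kernel a x - geom_kernel a' x) + 2 * norm (geom_kernel b x - geom_kernel b' x)"
      by (metis norm_triangle_ineq norm_mult norm_numeral)
    also have "\<dots> \<le> ?D"
      using norm_geom_kernel_diff_le[OF a, of x] norm_geom_kernel_diff_le[OF b, of x] by simp
    finally show ?thesis by (rule power_mono) simp
  qed
  have "(LINT x:{0..2*pi}|lborel. (norm (two_pole a b x - two_pole a' b' x))^2) \<le> (LINT x:{0..2*pi}|lborel. ?D^2)"
  proof (rule set_integral_mono[OF _ _ pointwise])
    show "set_integrable lborel {0..2*pi} (\<lambda>x. (norm (two_pole a b x - two_pole a' b' x))^2)"
      unfolding set_integrable_def using a b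
      by (intro borel_integrable_compact) (auto intro!: continuous_intros continuous_on_two_pole)
  qed (simp add: set_integrable_def)
  then have "L2_norm (\<lambda>x. two_pole a b x - two_pole a' b' x) \<le> sqrt (2*pi * ?D^2)"
    unfolding L2_norm_def by (simp add: set_integral_const mult.commute)
  then show ?thesis using D_nonneg by (simp add: real_sqrt_mult)
qed

lemma diff_mult_sum_shifted_powers:
  "((a::'a::comm_ring_1) - b) * (\<Sum>m<j. a^(m+1) * b^(j-m)) = a^(j+1) * b - a * b^(j+1)"
proof (induction j)
  case (Suc j)
  have "(\<Sum>m<Suc j. a^(m+1) * b^(Suc j-m)) = b * (\<Sum>m<j. a^(m+1) * b^(j-m)) + a^(j+1) * b"
    by (simp add: sum_distrib_left Suc_diff_le mult_ac)
  then have "(a - b) * (\<Sum>m<Suc j. a^(m+1) * b^(Suc j-m))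
      = b * ((a - b) * (\<Sum>m<j. a^(m+1) * b^(j-m))) + (a - b) * a^(j+1) * b"
    by (simp add: algebra_simps)
  then show ?case unfolding Suc.IH by (simp add: algebra_simps)
qed simp

lemma sum_two_pole_products:
  fixes a b :: "'a::comm_ring_1"
  shows "(\<Sum>m\<in>{1..<Suc j}. (a^m + b^m) * (a^(Suc j - m) + b^(Suc j - m)))
     = of_nat j * (a^(Suc j) + b^(Suc j)) + (\<Sum>m<j. a^(m+1) * b^(j-m) + b^(m+1) * a^(j-m))"
proof -
  have "(\<Sum>m\<in>{1..<Suc j}. (a^m + b^m) * (a^(Suc j - m) + b^(Suc j - m)))
     = (\<Sum>m<j. (a^(m+1) + b^(m+1)) * (a^(j-m) + b^(j-m)))"
    using sum.shift_bounds_Suc_ivl[of "\<lambda>m. (a^m + b^m) * (a^(Suc j - m) + b^(Suc j - m))" 0 j]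
    by (simp add: atLeast0LessThan)
  also have "\<dots> = (\<Sum>m<j. (a^(Suc j) + b^(Suc j)) + (a^(m+1) * b^(j-m) + b^(m+1) * a^(j-m)))"
  proof (rule sum.cong[OF refl])
    fix m assume "m \<in> {..<j}"
    then have "m + 1 + (j - m) = Suc j" by simp
    then have "a^(m+1) * a^(j-m) = a^(Suc j)" "b^(m+1) * b^(j-m) = b^(Suc j)"
      by (metis power_add)+
    moreover have "(a^(m+1) + b^(m+1)) * (a^(j-m) + b^(j-m))
        = (a^(m+1) * a^(j-m) + b^(m+1) * b^(j-m)) + (a^(m+1) * b^(j-m) + b^(m+1) * a^(j-m))"
      by (simp add: algebra_simps)
    ultimately show "(a^(m+1) + b^(m+1)) * (a^(j-m) + b^(j-m))
        = (a^(Suc j) + b^(Suc j)) + (a^(m+1) * b^(j-m) + b^(m+1) * a^(j-m))"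
      by (simp only:)
  qed
  finally show ?thesis by (simp add: sum.distrib)
qed

text \<open>The Fourier form of the equation at frequency \<open>k = j + 1\<close> for the coefficients \<open>2 (a\<^sup>k + b\<^sup>k)\<close>,
  given the equations of motion of the poles.\<close>
lemma two_pole_coeff_ode_identity:
  fixes a b a' b' :: complex
  assumes "b \<noteq> a"
    and a': "a' * (b - a) = \<i> * a * (a - 3*b)" and b': "b' * (a - b) = \<i> * b * (b - 3*a)"
  shows "of_nat (Suc j) * (2 * (a^j * a' + b^j * b')) =
     - (\<i> * of_nat (Suc j)^2) * (2 * (a^(Suc j) + b^(Suc j)))
     + (\<i> * of_nat (Suc j) / 2) * (\<Sum>m\<in>{1..<Suc j}. (2*(a^m + b^m)) * (2*(a^(Suc j - m) + b^(Suc j - m))))"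
proof -
  define A where "A = a^(Suc j) + b^(Suc j)"
  define S1 where "S1 = (\<Sum>m<j. a^(m+1) * b^(j-m))"
  define S2 where "S2 = (\<Sum>m<j. b^(m+1) * a^(j-m))"
  have tele: "(a - b) * S1 = a^(j+1) * b - a * b^(j+1)" "(b - a) * S2 = b^(j+1) * a - b * a^(j+1)"
    unfolding S1_def S2_def by (rule diff_mult_sum_shifted_powers)+
  have "(b - a) * (S1 + S2 - A) = - ((a - b) * S1) + (b - a) * S2 - (b - a) * A"
    by (simp add: algebra_simps)
  also have "\<dots> = - (a^(j+1) * b - a * b^(j+1)) + (b^(j+1) * a - b * a^(j+1)) - (b - a) * A"
    unfolding tele ..
  also have "\<dots> = a^(j+2) - 3 * a^(j+1) * b + 3 * a * b^(j+1) - b^(j+2)"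
    by (simp add: A_def algebra_simps)
  also have "\<dots> = - (\<i> * a^j * (\<i> * a * (a - 3*b)) - \<i> * b^j * (\<i> * b * (b - 3*a)))"
    by (simp add: algebra_simps)
  also have "\<dots> = - (\<i> * a^j * (a' * (b - a)) - \<i> * b^j * (b' * (a - b)))"
    unfolding a' b' ..
  also have "\<dots> = (b - a) * (- \<i> * (a^j * a' + b^j * b'))"
    by (simp add: algebra_simps)
  finally have "S1 + S2 - A = - \<i> * (a^j * a' + b^j * b')"
    by (subst (asm) mult_left_cancel) (use \<open>b \<noteq> a\<close> in auto)
  then have derivs: "a^j * a' + b^j * b' = \<i> * (S1 + S2 - A)"
    by (simp add: mult.assoc[symmetric])
  have "(\<Sum>m\<in>{1..<Suc j}. (2*(a^m + b^m)) * (2*(a^(Suc j - m) + b^(Suc j - m))))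
      = 4 * (\<Sum>m\<in>{1..<Suc j}. (a^m + b^m) * (a^(Suc j - m) + b^(Suc j - m)))"
    unfolding sum_distrib_left by (rule sum.cong) (simp_all add: algebra_simps)
  also have "\<dots> = 4 * (of_nat j * A + S1 + S2)"
    unfolding A_def S1_def S2_def sum_two_pole_products by (simp add: sum.distrib add.assoc)
  finally have conv: "(\<Sum>m\<in>{1..<Suc j}. (2*(a^m + b^m)) * (2*(a^(Suc j - m) + b^(Suc j - m))))
      = 4 * (of_nat j * A + S1 + S2)" .
  show ?thesis
    unfolding conv derivs A_def[symmetric] by (simp add: field_simps power2_eq_square)
qed

lemma two_pole_coeff_convolution:
  assumes "k \<ge> 1"
  shows "(\<Sum>\<^sub>\<infinity>m::int. two_pole_coeff a b m * two_pole_coeff a b (k - m)) =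
    (\<Sum>m\<in>{1..<nat k}. (2*(a^m + b^m)) * (2*(a^(nat k - m) + b^(nat k - m))))"
proof -
  let ?c = "two_pole_coeff a b"
  have "(\<Sum>\<^sub>\<infinity>m::int. ?c m * ?c (k - m)) = (\<Sum>m\<in>{1..k-1}. ?c m * ?c (k - m))"
    by (subst infsum_cong_neutral[where T = "{1..k-1}"]) (auto simp: two_pole_coeff_def)
  also have "{1..k-1} = int ` {1..<nat k}"
  proof -
    have "x \<in> int ` {1..<nat k}" if "x \<in> {1..k-1}" for x
      using that by (auto intro!: image_eqI[of _ _ "nat x"])
    then show ?thesis by auto
  qed
  also have "(\<Sum>m\<in>int ` {1..<nat k}. ?c m * ?c (k - m)) = (\<Sum>m\<in>{1..<nat k}. ?c (int m) * ?c (k - int m))"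
    by (simp add: sum.reindex)
  also have "\<dots> = (\<Sum>m\<in>{1..<nat k}. (2*(a^m + b^m)) * (2*(a^(nat k - m) + b^(nat k - m))))"
    by (rule sum.cong) (auto simp: two_pole_coeff_def nat_diff_distrib)
  finally show ?thesis .
qed

lemma has_vector_derivative_two_pole_coeff:
  fixes a b :: "real \<Rightarrow> complex"
  assumes "b t \<noteq> a t"
    and a: "(a has_vector_derivative a') (at t within S)" and b: "(b has_vector_derivative b') (at t within S)"
    and a': "a' * (b t - a t) = \<i> * a t * (a t - 3 * b t)" and b': "b' * (a t - b t) = \<i> * b t * (b t - 3 * a t)"
  shows "((\<lambda>\<tau>. two_pole_coeff (a \<tau>) (b \<tau>) k) has_vector_derivative
           (- (\<i> * of_int (k^2)) * two_pole_coeff (a t) (b t) k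
            + (\<i> * of_int k / 2) * (\<Sum>\<^sub>\<infinity>m::int. two_pole_coeff (a t) (b t) m * two_pole_coeff (a t) (b t) (k - m))))
         (at t within S)"
proof (cases "k \<ge> 1")
  case True
  define j where "j = nat k - 1"
  have k: "k = int (Suc j)" and nat_k: "nat k = Suc j" using True by (simp_all add: j_def)
  let ?c = "two_pole_coeff (a t) (b t)"
  have pow: "((\<lambda>\<tau>. f \<tau> ^ Suc j) has_vector_derivative (of_nat (Suc j) * f t ^ j * f')) (at t within S)"
    if "(f has_vector_derivative f') (at t within S)" for f :: "real \<Rightarrow> complex" and f'
    using field_vector_diff_chain_within[OF that DERIV_power[OF DERIV_ident, of "Suc j"]]
    by (simp add: comp_def mult_ac del: power_Suc)
  have coeff: "(\<lambda>\<tau>. two_pole_coeff (a \<tau>) (b \<tau>) k) = (\<lambda>\<tau>. 2 * (a \<tau> ^ Suc j + b \<tau> ^ Suc j))"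
    by (simp add: two_pole_coeff_def nat_k True)
  have "((\<lambda>\<tau>. two_pole_coeff (a \<tau>) (b \<tau>) k) has_vector_derivative
          2 * (of_nat (Suc j) * a t ^ j * a' + of_nat (Suc j) * b t ^ j * b')) (at t within S)"
    unfolding coeff by (intro has_vector_derivative_mult_right has_vector_derivative_add pow a b)
  moreover have "2 * (of_nat (Suc j) * a t ^ j * a' + of_nat (Suc j) * b t ^ j * b')
      = of_nat (Suc j) * (2 * (a t ^ j * a' + b t ^ j * b'))"
    by (simp add: algebra_simps)
  moreover note two_pole_coeff_ode_identity[OF \<open>b t \<noteq> a t\<close> a' b', of j]
  moreover have "?c k = 2 * (a t ^ Suc j + b t ^ Suc j)"
    by (simp add: two_pole_coeff_def nat_k True)
  moreover have "of_int k = (of_nat (Suc j) :: complex)" "of_int (k^2) = (of_nat (Suc j) ^ 2 :: complex)"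
    by (simp_all add: k)
  moreover have "(\<Sum>\<^sub>\<infinity>m::int. ?c m * ?c (k - m))
      = (\<Sum>m\<in>{1..<Suc j}. (2*(a t^m + b t^m)) * (2*(a t^(Suc j - m) + b t^(Suc j - m))))"
    using two_pole_coeff_convolution[OF True] by (simp only: nat_k)
  ultimately show ?thesis by (simp only:)
next
  case False
  then have "(\<Sum>\<^sub>\<infinity>m::int. two_pole_coeff (a t) (b t) m * two_pole_coeff (a t) (b t) (k - m)) = 0"
    by (intro infsum_0) (auto simp: two_pole_coeff_def)
  with False show ?thesis by (simp add: two_pole_coeff_def)
qed

lemma L2_norm_nonneg: "L2_norm f \<ge> 0"
  unfolding L2_norm_def set_lebesgue_integral_def
  by (intro real_sqrt_ge_zero integral_nonneg) (auto simp: indicator_def)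

lemma is_solution_two_pole:
  fixes a b :: "real \<Rightarrow> complex"
  assumes small: "\<And>t. t \<in> {0..<T} \<Longrightarrow> norm (a t) < 1" "\<And>t. t \<in> {0..<T} \<Longrightarrow> norm (b t) < 1"
    and distinct: "\<And>t. t \<in> {0..<T} \<Longrightarrow> b t \<noteq> a t"
    and a': "\<And>t. t \<in> {0..<T} \<Longrightarrow>
               (a has_vector_derivative \<i> * a t * (a t - 3 * b t) / (b t - a t)) (at t within {0..<T})"
    and b': "\<And>t. t \<in> {0..<T} \<Longrightarrow>
               (b has_vector_derivative \<i> * b t * (b t - 3 * a t) / (a t - b t)) (at t within {0..<T})"
  shows "is_solution (\<lambda>t. two_pole (a t) (b t)) (two_pole (a 0) (b 0)) T"
  unfolding is_solution_def
proof (intro conjI ballI allI)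
  fix t assume t: "t \<in> {0..<T}"
  show "two_pole (a t) (b t) \<in> L2_0"
    using small[OF t] by (rule two_pole_in_L2_0)
  define D where "D \<tau> = 2 * norm (a \<tau> - a t) / ((1 - norm (a \<tau>)) * (1 - norm (a t)))
                        + 2 * norm (b \<tau> - b t) / ((1 - norm (b \<tau>)) * (1 - norm (b t)))" for \<tau>
  have "continuous (at t within {0..<T}) D"
    unfolding D_def using small[OF t]
    by (intro continuous_intros has_vector_derivative_continuous[OF a'[OF t]]
          has_vector_derivative_continuous[OF b'[OF t]]) auto
  then have "((\<lambda>\<tau>. sqrt (2*pi) * D \<tau>) \<longlongrightarrow> sqrt (2*pi) * D t) (at t within {0..<T})"
    unfolding continuous_within by (intro tendsto_mult_left)
  then have D_lim: "((\<lambda>\<tau>. sqrt (2*pi) * D \<tau>) \<longlongrightarrow> 0) (at t within {0..<T})"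
    by (simp add: D_def)
  have "\<forall>\<^sub>F \<tau> in at t within {0..<T}.
      L2_norm (\<lambda>x. two_pole (a \<tau>) (b \<tau>) x - two_pole (a t) (b t) x) \<le> sqrt (2*pi) * D \<tau>"
  proof -
    have "L2_norm (\<lambda>x. two_pole (a \<tau>) (b \<tau>) x - two_pole (a t) (b t) x) \<le> sqrt (2*pi) * D \<tau>"
      if "\<tau> \<in> {0..<T}" for \<tau>
      unfolding D_def by (rule L2_norm_two_pole_diff_le) (use small that t in auto)
    then show ?thesis
      unfolding eventually_at_filter by (intro always_eventually) blast
  qed
  then show "((\<lambda>\<tau>. L2_norm (\<lambda>x. two_pole (a \<tau>) (b \<tau>) x - two_pole (a t) (b t) x)) \<longlongrightarrow> 0)
      (at t within {0..<T})"
    by (rule tendsto_sandwich[OF always_eventually[OF allI[OF L2_norm_nonneg]] _ tendsto_const D_lim])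
  fix k
  have coeff: "fourier_coeff (two_pole (a \<tau>) (b \<tau>)) = two_pole_coeff (a \<tau>) (b \<tau>)" if "\<tau> \<in> {0..<T}" for \<tau>
    using small that by (intro fourier_coeff_two_pole)
  show "((\<lambda>\<tau>. fourier_coeff (two_pole (a \<tau>) (b \<tau>)) k) has_vector_derivative
          - (\<i> * of_int (k^2)) * fourier_coeff (two_pole (a t) (b t)) k
          + (\<i> * of_int k / 2) * (\<Sum>\<^sub>\<infinity>m. fourier_coeff (two_pole (a t) (b t)) m
                                          * fourier_coeff (two_pole (a t) (b t)) (k - m)))
        (at t within {0..<T})"
    unfolding coeff[OF t]
    by (rule has_vector_derivative_transform_within
          [OF has_vector_derivative_two_pole_coeff[OF distinct[OF t] a'[OF t] b'[OF t]], of 1])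
       (use t distinct[OF t] in \<open>simp_all add: coeff\<close>)
qed simp

lemma FL_norm_infinity_ge:
  "k \<noteq> 0 \<Longrightarrow> ereal (\<bar>real_of_int k\<bar> powr s * norm (fourier_coeff f k)) \<le> FL_norm s \<infinity> f"
  unfolding FL_norm_def by (auto intro!: SUP_upper)

lemma FL_norm_ge:
  assumes "s \<ge> 0" "q > 0" "c \<ge> 0" and coeff: "\<And>k. k \<in> {1..int K} \<Longrightarrow> c \<le> norm (fourier_coeff f k)"
  shows "ereal (real K powr (1/q) * c) \<le> FL_norm s (ereal q) f"
proof -
  define I where "I = (\<integral>\<^sup>+ k. ennreal ((\<bar>real_of_int k\<bar> powr s * norm (fourier_coeff f k)) powr q)
                          \<partial>count_space (UNIV - {0::int}))"
  have "ennreal (real K * c powr q) = (\<Sum>k\<in>{1..int K}. ennreal (c powr q))"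
    using assms by (simp add: ennreal_mult' ennreal_of_nat_eq_real_of_nat)
  also have "\<dots> \<le> (\<Sum>k\<in>{1..int K}. ennreal ((\<bar>real_of_int k\<bar> powr s * norm (fourier_coeff f k)) powr q))"
  proof (intro sum_mono ennreal_leI powr_mono2)
    fix k assume k: "k \<in> {1..int K}"
    have "1 \<le> \<bar>real_of_int k\<bar> powr s" using k assms by (intro ge_one_powr_ge_zero) auto
    then show "c \<le> \<bar>real_of_int k\<bar> powr s * norm (fourier_coeff f k)"
      using coeff[OF k] \<open>c \<ge> 0\<close> by (metis mult_mono' mult_1 norm_ge_zero zero_le_one)
  qed (use assms in auto)
  also have "\<dots> = (\<integral>\<^sup>+ k. ennreal ((\<bar>real_of_int k\<bar> powr s * norm (fourier_coeff f k)) powr q)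
                        * indicator {1..int K} k \<partial>count_space UNIV)"
    by (simp add: nn_integral_count_space_indicator[symmetric] nn_integral_count_space_finite)
  also have "\<dots> \<le> (\<integral>\<^sup>+ k. ennreal ((\<bar>real_of_int k\<bar> powr s * norm (fourier_coeff f k)) powr q)
                        * indicator (UNIV - {0}) k \<partial>count_space UNIV)"
    by (intro nn_integral_mono) (auto simp: indicator_def)
  also have "\<dots> = I"
    by (simp add: I_def nn_integral_count_space_indicator)
  finally have I_ge: "ennreal (real K * c powr q) \<le> I" .
  show ?thesis
  proof (cases "I = \<infinity>")
    case False
    then have "real K * c powr q \<le> enn2real I"
      using I_ge enn2real_mono[OF I_ge] by (simp add: less_top)
    then have "(real K * c powr q) powr (1/q) \<le> enn2real I powr (1/q)"
      using assms by (intro powr_mono2) auto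
    moreover have "(real K * c powr q) powr (1/q) = real K powr (1/q) * c"
      using assms by (simp add: powr_mult powr_powr)
    ultimately show ?thesis
      using False by (simp add: FL_norm_def Let_def I_def)
  qed (simp add: FL_norm_def Let_def I_def)
qed

lemma ex_nat_powr_ge: "e > 0 \<Longrightarrow> \<exists>K::nat. K \<ge> 1 \<and> y \<le> real K powr e"
proof -
  assume "e > 0"
  define K :: nat where "K = nat \<lceil>\<bar>y\<bar> powr (1/e)\<rceil> + 1"
  have "\<bar>y\<bar> powr (1/e) \<le> real K" unfolding K_def by linarith
  then have "(\<bar>y\<bar> powr (1/e)) powr e \<le> real K powr e"
    using \<open>e > 0\<close> by (intro powr_mono2) auto
  then have "y \<le> real K powr e"
    using \<open>e > 0\<close> by (simp add: powr_powr)
  moreover have "K \<ge> 1" by (simp add: K_def)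
  ultimately show ?thesis by blast
qed

lemma FL_norm_infinity_tendsto_top:
  assumes "s > 0" "c > 0" and coeff: "\<And>k. k \<ge> 1 \<Longrightarrow> eventually (\<lambda>t. c < norm (fourier_coeff (u t) k)) F"
  shows "((\<lambda>t. FL_norm s \<infinity> (u t)) \<longlongrightarrow> \<infinity>) F"
  unfolding tendsto_PInfty
proof
  fix M :: real
  obtain K :: nat where K: "K \<ge> 1" "M / c \<le> real K powr s"
    using ex_nat_powr_ge[OF \<open>s > 0\<close>] by blast
  have "eventually (\<lambda>t. c < norm (fourier_coeff (u t) (int K))) F"
    using K(1) by (intro coeff) simp
  then show "eventually (\<lambda>t. ereal M < FL_norm s \<infinity> (u t)) F"
  proof eventually_elim
    case (elim t)
    have "M \<le> real K powr s * c" using K(2) \<open>c > 0\<close> by (simp add: field_simps)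
    also have "\<dots> < real K powr s * norm (fourier_coeff (u t) (int K))"
      using elim K(1) by (intro mult_strict_left_mono) auto
    also have "ereal \<dots> \<le> FL_norm s \<infinity> (u t)"
      using FL_norm_infinity_ge[of "int K" s "u t"] K(1) by simp
    finally show ?case by simp
  qed
qed

lemma FL_norm_tendsto_top:
  assumes "s \<ge> 0" "q > 0" "c > 0"
    and coeff: "\<And>k. k \<ge> 1 \<Longrightarrow> eventually (\<lambda>t. c < norm (fourier_coeff (u t) k)) F"
  shows "((\<lambda>t. FL_norm s (ereal q) (u t)) \<longlongrightarrow> \<infinity>) F"
  unfolding tendsto_PInfty
proof
  fix M :: real
  obtain K :: nat where K: "(M + 1) / c \<le> real K powr (1/q)"
    using ex_nat_powr_ge[of "1/q"] \<open>q > 0\<close> by auto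
  have "eventually (\<lambda>t. \<forall>k\<in>{1..int K}. c < norm (fourier_coeff (u t) k)) F"
    using coeff by (intro eventually_ball_finite) auto
  then show "eventually (\<lambda>t. ereal M < FL_norm s (ereal q) (u t)) F"
  proof eventually_elim
    case (elim t)
    have "M < real K powr (1/q) * c" using K \<open>c > 0\<close> by (simp add: field_simps)
    then have "ereal M < ereal (real K powr (1/q) * c)" by simp
    also have "\<dots> \<le> FL_norm s (ereal q) (u t)"
      using elim assms by (intro FL_norm_ge) (auto intro: less_imp_le)
    finally show ?case .
  qed
qed

lemma Lp_norm_tendsto_top:
  assumes "q > 0"
    and "((\<lambda>t. \<integral>\<^sup>+x. ennreal (norm (u t x) powr q) * indicator {0..2*pi} x \<partial>lborel) \<longlongrightarrow> \<infinity>) F"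
  shows "((\<lambda>t. Lp_norm (ereal q) (u t)) \<longlongrightarrow> \<infinity>) F"
  unfolding tendsto_PInfty
proof
  fix M :: real
  have "ennreal ((\<bar>M\<bar> + 1) powr q) < \<infinity>" by simp
  with assms(2) have "eventually (\<lambda>t. ennreal ((\<bar>M\<bar> + 1) powr q)
      < \<integral>\<^sup>+x. ennreal (norm (u t x) powr q) * indicator {0..2*pi} x \<partial>lborel) F"
    by (rule order_tendstoD)
  then show "eventually (\<lambda>t. ereal M < Lp_norm (ereal q) (u t)) F"
  proof eventually_elim
    case (elim t)
    define I where "I = \<integral>\<^sup>+x. ennreal (norm (u t x) powr q) * indicator {0..2*pi} x \<partial>lborel"
    show ?case
    proof (cases "I = \<infinity>")
      case False
      then obtain r where r: "I = ennreal r" "r \<ge> 0" by (cases I rule: ennreal_cases) auto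
      then have "(\<bar>M\<bar> + 1) powr q < r" using elim by (simp add: I_def ennreal_less_iff)
      then have "((\<bar>M\<bar> + 1) powr q) powr (1/q) < r powr (1/q)"
        using assms by (intro powr_less_mono2) auto
      then have "M < r powr (1/q)" using assms by (simp add: powr_powr)
      then show ?thesis using False r by (simp add: Lp_norm_def I_def[symmetric] Let_def)
    qed (simp add: Lp_norm_def I_def Let_def)
  qed
qed

lemma nn_integral_le_Lp_norm_infinity:
  assumes "Lp_norm \<infinity> f \<le> ereal M" "M \<ge> 0"
  shows "(\<integral>\<^sup>+x. ennreal (norm (f x)) * indicator {0..2*pi} x \<partial>lborel) \<le> ennreal (2*pi*M)"
proof -
  have "AE x in restrict_space lborel {0..2*pi}.
          ereal (norm (f x)) \<le> esssup (restrict_space lborel {0..2*pi}) (\<lambda>x. ereal (norm (f x)))"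
    by (rule esssup_AE)
  then have "AE x in restrict_space lborel {0..2*pi}. ereal (norm (f x)) \<le> ereal M"
    by eventually_elim (erule order_trans, use assms in \<open>simp add: Lp_norm_def\<close>)
  then have "AE x in lborel. x \<in> {0..2*pi} \<longrightarrow> norm (f x) \<le> M"
    by (subst (asm) AE_restrict_space_iff) auto
  then have "(\<integral>\<^sup>+x. ennreal (norm (f x)) * indicator {0..2*pi} x \<partial>lborel)
      \<le> (\<integral>\<^sup>+x. ennreal M * indicator {0..2*pi} x \<partial>lborel)"
    by (intro nn_integral_mono_AE) (auto simp: indicator_def ennreal_leI elim!: eventually_mono)
  also have "\<dots> = ennreal (2*pi*M)"
    using \<open>M \<ge> 0\<close> by (simp add: nn_integral_cmult_indicator ennreal_mult'[symmetric] mult.commute)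
  finally show ?thesis .
qed

lemma Lp_norm_infinity_tendsto_top:
  assumes "((\<lambda>t. \<integral>\<^sup>+x. ennreal (norm (u t x)) * indicator {0..2*pi} x \<partial>lborel) \<longlongrightarrow> \<infinity>) F"
  shows "((\<lambda>t. Lp_norm \<infinity> (u t)) \<longlongrightarrow> \<infinity>) F"
  unfolding tendsto_PInfty
proof
  fix M :: real
  have "ennreal (2*pi*\<bar>M\<bar>) < \<infinity>" by simp
  with assms have "eventually (\<lambda>t. ennreal (2*pi*\<bar>M\<bar>)
      < \<integral>\<^sup>+x. ennreal (norm (u t x)) * indicator {0..2*pi} x \<partial>lborel) F"
    by (rule order_tendstoD)
  then show "eventually (\<lambda>t. ereal M < Lp_norm \<infinity> (u t)) F"
  proof eventually_elim
    case (elim t)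
    show ?case
    proof (rule ccontr)
      assume "\<not> ereal M < Lp_norm \<infinity> (u t)"
      then have "Lp_norm \<infinity> (u t) \<le> ereal \<bar>M\<bar>" by (meson abs_ge_self ereal_less_eq(3) not_le order_trans)
      with elim show False
        using nn_integral_le_Lp_norm_infinity[of "u t" "\<bar>M\<bar>"] by simp
    qed
  qed
qed

lemma nn_integral_tendsto_top_at_left:
  fixes f :: "real \<Rightarrow> 'a \<Rightarrow> ennreal"
  assumes "b < a"
    and meas: "\<And>t. t \<in> {b<..<a} \<Longrightarrow> f t \<in> borel_measurable M"
    and lim: "AE x in M. ((\<lambda>t. f t x) \<longlongrightarrow> g x) (at_left a)"
    and top: "integral\<^sup>N M g = \<infinity>"
  shows "((\<lambda>t. integral\<^sup>N M (f t)) \<longlongrightarrow> \<infinity>) (at_left a)"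
proof (rule tendsto_at_left_sequentially[OF \<open>b < a\<close>])
  fix S :: "nat \<Rightarrow> real"
  assume S: "\<And>n. S n < a" "\<And>n. b < S n" "incseq S" "S \<longlonglongrightarrow> a"
  have S_at_left: "filterlim S (at_left a) sequentially"
    using S(1,4) by (intro tendsto_imp_filterlim_at_left) (auto intro: always_eventually)
  from lim have "AE x in M. liminf (\<lambda>n. f (S n) x) = g x"
    by eventually_elim (rule lim_imp_Liminf, simp, rule filterlim_compose[OF _ S_at_left])
  then have "\<infinity> = (\<integral>\<^sup>+x. liminf (\<lambda>n. f (S n) x) \<partial>M)"
    using top by (simp add: nn_integral_cong_AE)
  also have "\<dots> \<le> liminf (\<lambda>n. integral\<^sup>N M (f (S n)))"
    using S meas by (intro nn_integral_liminf) auto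
  finally have "liminf (\<lambda>n. integral\<^sup>N M (f (S n))) = \<infinity>"
    by (simp add: top_unique)
  then show "(\<lambda>n. integral\<^sup>N M (f (S n))) \<longlonglongrightarrow> \<infinity>"
    by (intro order_tendstoI) (auto intro: less_LiminfD)
qed

lemma nn_integral_inverse_diverges:
  "(\<integral>\<^sup>+x. ennreal (1 / (x - c)) * indicator {c<..c+1} x \<partial>lborel) = \<infinity>"
proof -
  have "ennreal (real n) \<le> (\<integral>\<^sup>+x. ennreal (1 / (x - c)) * indicator {c<..c+1} x \<partial>lborel)" for n :: nat
  proof -
    define e where "e = exp (- real n)"
    have e: "0 < e" "e \<le> 1" by (auto simp: e_def)
    have "(\<integral>\<^sup>+x. ennreal (1 / (x - c)) * indicator {c + e..c + 1} x \<partial>lborel)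
        = ennreal (ln (c + 1 - c) - ln (c + e - c))"
      using e by (intro nn_integral_FTC_Icc) (auto intro!: derivative_eq_intros)
    also have "\<dots> = ennreal (real n)" by (simp add: e_def)
    finally have "ennreal (real n) = (\<integral>\<^sup>+x. ennreal (1 / (x - c)) * indicator {c + e..c + 1} x \<partial>lborel)" ..
    also have "\<dots> \<le> (\<integral>\<^sup>+x. ennreal (1 / (x - c)) * indicator {c<..c+1} x \<partial>lborel)"
      using e by (intro nn_integral_mono) (auto simp: indicator_def)
    finally show ?thesis .
  qed
  then have "(SUP n. of_nat n :: ennreal) \<le> (\<integral>\<^sup>+x. ennreal (1 / (x - c)) * indicator {c<..c+1} x \<partial>lborel)"
    by (intro SUP_least) (simp add: ennreal_of_nat_eq_real_of_nat)
  then show ?thesis by (simp add: ennreal_SUP_of_nat_eq_top top_unique)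
qed

text \<open>The explicit solution of the equations of motion: \<open>pole_a w\<close> and \<open>pole_b w\<close> are the roots of
  \<open>z\<^sup>2 + (9/10) e\<^sup>-\<^sup>i\<^sup>w z + e\<^sup>-\<^sup>4\<^sup>i\<^sup>w / 10\<close>.\<close>

definition pole_disc :: "complex \<Rightarrow> complex" where
  "pole_disc w = 81/100 - 2/5 * exp (- (2 * \<i> * w))"

definition pole_a :: "complex \<Rightarrow> complex" where
  "pole_a w = exp (- (\<i> * w)) * (- (9/10) + csqrt (pole_disc w)) / 2"

definition pole_b :: "complex \<Rightarrow> complex" where
  "pole_b w = exp (- (\<i> * w)) * (- (9/10) - csqrt (pole_disc w)) / 2"

lemma pole_disc_of_real: "pole_disc (of_real t) = 81/100 - 2/5 * cis (- (2 * t))"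
  by (simp add: pole_disc_def cis_conv_exp mult_ac)

lemma Re_pole_disc_ge: "Re (pole_disc (of_real t)) \<ge> 41/100"
  using cos_le_one[of "2 * t"] by (simp add: pole_disc_of_real)

lemma csqrt_pole_disc_nonzero: "csqrt (pole_disc (of_real t)) \<noteq> 0"
  using Re_pole_disc_ge[of t] by auto

lemma norm_pole_disc_le:
  "norm (pole_disc (of_real t)) \<le> 121/100"
  "0 \<le> t \<Longrightarrow> t < pi/2 \<Longrightarrow> norm (pole_disc (of_real t)) < 121/100"
proof -
  have "(norm (pole_disc (of_real t)))^2 = (81/100 - 2/5 * cos (2*t))^2 + (2/5 * sin (2*t))^2"
    by (simp add: cmod_power2 pole_disc_of_real)
  also have "\<dots> = 6561/10000 + 4/25 - 81/125 * cos (2*t)"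
    unfolding power_mult_distrib sin_squared_eq by (simp add: power2_eq_square algebra_simps)
  finally have sq: "(norm (pole_disc (of_real t)))^2 = 6561/10000 + 4/25 - 81/125 * cos (2*t)" .
  have "(norm (pole_disc (of_real t)))^2 \<le> (121/100)^2"
    unfolding sq by (simp add: power2_eq_square) (use cos_ge_minus_one[of "2*t"] in linarith)
  then show "norm (pole_disc (of_real t)) \<le> 121/100"
    by (rule power2_le_imp_le) simp
  assume "0 \<le> t" "t < pi/2"
  then have "cos (2*t) > cos pi" by (intro cos_monotone_0_pi) auto
  then have "(norm (pole_disc (of_real t)))^2 < (121/100)^2"
    unfolding sq by (simp add: power2_eq_square)
  then show "norm (pole_disc (of_real t)) < 121/100"
    by (rule power2_less_imp_less) simp
qed

lemma norm_pole_a_le: "norm (pole_a (of_real t)) \<le> 3/4"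
proof -
  let ?S = "csqrt (pole_disc (of_real t))"
  have "(norm (- (9/10) + ?S))^2 = (Re ?S - 9/10)^2 + (Im ?S)^2"
    unfolding cmod_power2 by simp
  also have "\<dots> = (norm ?S)^2 - 9/5 * Re ?S + 81/100"
    unfolding cmod_power2 by (simp add: power2_eq_square algebra_simps)
  also have "\<dots> \<le> 121/100 + 81/100"
  proof -
    have "(norm ?S)^2 = norm (pole_disc (of_real t))" by simp
    then show ?thesis
      using norm_pole_disc_le(1)[of t] Re_csqrt[of "pole_disc (of_real t)"] by linarith
  qed
  also have "\<dots> \<le> (3/2)^2" by (simp add: power2_eq_square)
  finally have "norm (- (9/10) + ?S) \<le> 3/2"
    by (rule power2_le_imp_le) simp
  then show ?thesis
    by (simp add: pole_a_def norm_mult norm_divide norm_exp_eq_Re)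
qed

lemma norm_pole_b_less:
  assumes "0 \<le> t" "t < pi/2"
  shows "norm (pole_b (of_real t)) < 1"
proof -
  let ?S = "csqrt (pole_disc (of_real t))"
  have "norm ?S = sqrt (norm (pole_disc (of_real t)))" by simp
  also have "\<dots> < sqrt (121/100)"
    using norm_pole_disc_le(2)[OF assms] by (rule real_sqrt_less_mono)
  also have "sqrt (121/100) = 11/10"
    by (rule real_sqrt_unique) (simp_all add: power2_eq_square)
  finally have "norm ?S < 11/10" .
  moreover have "norm (- (9/10) - ?S) \<le> 9/10 + norm ?S"
    using norm_triangle_ineq4[of "- (9/10)" ?S] by simp
  ultimately have "norm (- (9/10) - ?S) < 2" by linarith
  then show ?thesis
    by (simp add: pole_b_def norm_mult norm_divide norm_exp_eq_Re)
qed

lemma pole_b_ne_pole_a: "pole_b (of_real t) \<noteq> pole_a (of_real t)"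
  using csqrt_pole_disc_nonzero[of t] by (simp add: pole_a_def pole_b_def field_simps)

lemma pole_a_b_at_pi_half: "pole_a (of_real (pi/2)) = - \<i> / 10" "pole_b (of_real (pi/2)) = \<i>"
proof -
  have "cis (- (2 * (pi/2))) = -1"
    by (simp add: complex_eq_iff)
  then have disc: "pole_disc (of_real (pi/2)) = 121/100"
    unfolding pole_disc_of_real by simp
  have sqrt_disc: "csqrt (121/100) = 11/10"
    by (rule csqrt_unique) (simp_all add: power2_eq_square)
  have "cis (- (pi/2)) = - \<i>"
    by (simp add: complex_eq_iff)
  then have exp_val: "exp (- (\<i> * complex_of_real (pi/2))) = - \<i>"
    by (simp add: cis_conv_exp)
  show "pole_a (of_real (pi/2)) = - \<i> / 10" "pole_b (of_real (pi/2)) = \<i>"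
    unfolding pole_a_def pole_b_def disc sqrt_disc exp_val by simp_all
qed

text \<open>With \<open>E = e\<^sup>-\<^sup>i\<^sup>t\<close> and \<open>S = (81/100 - 2E\<^sup>2/5)\<^sup>1\<^sup>/\<^sup>2\<close>, \<open>A\<close> and \<open>B\<close> are the poles and the left-hand
  factors are their derivatives in \<open>t\<close>.\<close>
lemma pole_derivative_identities:
  fixes E S :: complex
  assumes S2: "S^2 = 81/100 - 2/5 * E^2" and S0: "S \<noteq> 0"
  defines "A \<equiv> E * (- (9/10) + S) / 2" and "B \<equiv> E * (- (9/10) - S) / 2"
  shows "(- \<i> * A + E * ((4/5) * \<i> * E^2 / (2 * S)) / 2) * (B - A) = \<i> * A * (A - 3*B)"
    and "(- \<i> * B - E * ((4/5) * \<i> * E^2 / (2 * S)) / 2) * (A - B) = \<i> * B * (B - 3*A)"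
proof -
  have BA: "B - A = - E * S" by (simp add: A_def B_def field_simps)
  then have AB: "A - B = E * S" by (simp add: algebra_simps)
  have k: "E * ((4/5) * \<i> * E^2 / (2 * S)) / 2 * (E * S) = \<i> * E^4 / 5"
    using S0 by (simp add: field_simps power2_eq_square power4_eq_xxxx)
  have "(- \<i> * A + E * ((4/5) * \<i> * E^2 / (2 * S)) / 2) * (B - A) = \<i> * A * E * S - \<i> * E^4 / 5"
    unfolding BA using k by (simp add: algebra_simps)
  also have "\<dots> = \<i> * A * (A - 3*B) - (\<i> * E^2/2) * (S^2 - (81/100 - 2/5*E^2))"
    unfolding A_def B_def by (simp add: field_simps power2_eq_square power4_eq_xxxx)
  finally show "(- \<i> * A + E * ((4/5) * \<i> * E^2 / (2 * S)) / 2) * (B - A) = \<i> * A * (A - 3*B)"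
    using S2 by simp
  have "(- \<i> * B - E * ((4/5) * \<i> * E^2 / (2 * S)) / 2) * (A - B) = - \<i> * B * E * S - \<i> * E^4 / 5"
    unfolding AB using k by (simp add: algebra_simps)
  also have "\<dots> = \<i> * B * (B - 3*A) - (\<i> * E^2/2) * (S^2 - (81/100 - 2/5*E^2))"
    unfolding A_def B_def by (simp add: field_simps power2_eq_square power4_eq_xxxx)
  finally show "(- \<i> * B - E * ((4/5) * \<i> * E^2 / (2 * S)) / 2) * (A - B) = \<i> * B * (B - 3*A)"
    using S2 by simp
qed

lemma has_field_derivative_poles:
  fixes t :: real
  defines "A \<equiv> pole_a (of_real t)" and "B \<equiv> pole_b (of_real t)"
  shows "(pole_a has_field_derivative \<i> * A * (A - 3*B) / (B - A)) (at (of_real t))"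
    and "(pole_b has_field_derivative \<i> * B * (B - 3*A) / (A - B)) (at (of_real t))"
proof -
  let ?E = "exp (- (\<i> * complex_of_real t))" and ?S = "csqrt (pole_disc (of_real t))"
  have E2: "exp (- (2 * \<i> * complex_of_real t)) = ?E^2"
    by (simp add: exp_double[symmetric] mult_ac)
  have disc: "81/100 - 2/5 * exp (- (2 * \<i> * complex_of_real t)) \<notin> \<real>\<^sub>\<le>\<^sub>0"
    using Re_pole_disc_ge[of t] by (auto simp: complex_nonpos_Reals_iff pole_disc_def)
  have S2: "?S^2 = 81/100 - 2/5 * ?E^2" by (simp add: pole_disc_def E2)
  have B_ne_A: "B - A \<noteq> 0" "A - B \<noteq> 0"
    using pole_b_ne_pole_a[of t] by (simp_all add: A_def B_def)
  have "(pole_a has_field_derivative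
          - \<i> * A + ?E * ((4/5) * \<i> * exp (- (2 * \<i> * complex_of_real t)) / (2 * ?S)) / 2) (at (of_real t))"
    unfolding A_def pole_a_def pole_disc_def
    by (rule derivative_eq_intros refl | use disc in simp)+
  moreover have "- \<i> * A + ?E * ((4/5) * \<i> * ?E^2 / (2 * ?S)) / 2 = \<i> * A * (A - 3*B) / (B - A)"
    using B_ne_A(1) pole_derivative_identities(1)[OF S2 csqrt_pole_disc_nonzero]
    unfolding A_def B_def pole_a_def pole_b_def by (rule eq_divide_imp)
  ultimately show "(pole_a has_field_derivative \<i> * A * (A - 3*B) / (B - A)) (at (of_real t))"
    unfolding E2 by simp
  have "(pole_b has_field_derivative
          - \<i> * B - ?E * ((4/5) * \<i> * exp (- (2 * \<i> * complex_of_real t)) / (2 * ?S)) / 2) (at (of_real t))"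
    unfolding B_def pole_b_def pole_disc_def
    by (rule derivative_eq_intros refl | use disc in simp)+
  moreover have "- \<i> * B - ?E * ((4/5) * \<i> * ?E^2 / (2 * ?S)) / 2 = \<i> * B * (B - 3*A) / (A - B)"
    using B_ne_A(2) pole_derivative_identities(2)[OF S2 csqrt_pole_disc_nonzero]
    unfolding A_def B_def pole_a_def pole_b_def by (rule eq_divide_imp)
  ultimately show "(pole_b has_field_derivative \<i> * B * (B - 3*A) / (A - B)) (at (of_real t))"
    unfolding E2 by simp
qed

definition blowup_solution :: "real \<Rightarrow> real \<Rightarrow> complex" where
  "blowup_solution t = two_pole (pole_a (of_real t)) (pole_b (of_real t))"

lemma norm_poles_less_one:
  assumes "t \<in> {0..<pi/2}"
  shows "norm (pole_a (of_real t)) < 1" "norm (pole_b (of_real t)) < 1"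
  using norm_pole_a_le[of t] norm_pole_b_less assms by auto

lemma is_solution_blowup_solution: "is_solution blowup_solution (blowup_solution 0) (pi/2)"
  unfolding blowup_solution_def[abs_def]
  by (rule is_solution_two_pole)
     (auto simp: norm_poles_less_one pole_b_ne_pole_a
           intro!: has_vector_derivative_real_field has_field_derivative_poles)

lemma fourier_coeff_blowup_solution:
  "t \<in> {0..<pi/2} \<Longrightarrow> fourier_coeff (blowup_solution t) = two_pole_coeff (pole_a (of_real t)) (pole_b (of_real t))"
  unfolding blowup_solution_def by (intro fourier_coeff_two_pole norm_poles_less_one)

lemma poles_tendsto_at_pi_half:
  "((\<lambda>t. pole_a (of_real t)) \<longlongrightarrow> - \<i> / 10) (at_left (pi/2))"
  "((\<lambda>t. pole_b (of_real t)) \<longlongrightarrow> \<i>) (at_left (pi/2))"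
proof -
  have "continuous (at (pi/2) within {..<pi/2}) (\<lambda>t. pole_a (of_real t))"
    "continuous (at (pi/2) within {..<pi/2}) (\<lambda>t. pole_b (of_real t))"
    by (rule has_vector_derivative_continuous[OF has_vector_derivative_real_field[OF has_field_derivative_poles(1)]],
        rule has_vector_derivative_continuous[OF has_vector_derivative_real_field[OF has_field_derivative_poles(2)]])
  then show "((\<lambda>t. pole_a (of_real t)) \<longlongrightarrow> - \<i> / 10) (at_left (pi/2))"
    "((\<lambda>t. pole_b (of_real t)) \<longlongrightarrow> \<i>) (at_left (pi/2))"
    unfolding continuous_within pole_a_b_at_pi_half .
qed

lemma blowup_coeff_eventually_large:
  assumes "k \<ge> 1"
  shows "eventually (\<lambda>t. 1/2 < norm (fourier_coeff (blowup_solution t) k)) (at_left (pi/2))"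
proof -
  have "((\<lambda>t. norm (two_pole_coeff (pole_a (of_real t)) (pole_b (of_real t)) k))
          \<longlongrightarrow> norm (two_pole_coeff (- \<i>/10) \<i> k)) (at_left (pi/2))"
    unfolding two_pole_coeff_def using poles_tendsto_at_pi_half by (auto intro!: tendsto_intros)
  moreover have "1 \<le> norm (two_pole_coeff (- \<i>/10) \<i> k)"
  proof -
    have "norm ((- \<i>/10) ^ nat k) = (1/10) ^ nat k" by (simp add: norm_power norm_divide)
    also have "\<dots> \<le> (1/10) ^ 1" using assms by (intro power_decreasing) auto
    finally have "norm ((- \<i>/10) ^ nat k) \<le> 1/10" by simp
    moreover have "1 = norm (\<i> ^ nat k :: complex)" by (simp add: norm_power)
    moreover have "norm (\<i> ^ nat k :: complex) \<le> norm ((- \<i>/10) ^ nat k + \<i> ^ nat k) + norm ((- \<i>/10) ^ nat k)"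
      using norm_triangle_ineq4[of "(- \<i>/10) ^ nat k + \<i> ^ nat k" "(- \<i>/10) ^ nat k"] by simp
    ultimately have "1/2 \<le> norm ((- \<i>/10) ^ nat k + \<i> ^ nat k)" by linarith
    then show ?thesis
      unfolding two_pole_coeff_def if_P[OF assms] norm_mult by simp
  qed
  ultimately have "eventually (\<lambda>t. 1/2 < norm (two_pole_coeff (pole_a (of_real t)) (pole_b (of_real t)) k))
      (at_left (pi/2))"
    by (intro order_tendstoD(1)) auto
  moreover have "eventually (\<lambda>t. t \<in> {0<..<pi/2}) (at_left (pi/2))"
    by (rule eventually_at_left_real) simp
  ultimately show ?thesis
    by eventually_elim (simp add: fourier_coeff_blowup_solution)
qed

lemma norm_one_minus_exp_le: "norm (1 - exp (\<i> * of_real y)) \<le> \<bar>y\<bar>"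
proof -
  have "(norm (1 - exp (\<i> * of_real y)))^2 = (1 - cos y)^2 + (sin y)^2"
    by (simp add: cmod_power2 flip: cis_conv_exp)
  also have "\<dots> = 4 * (sin (y/2))^2"
    using cos_double_sin[of "y/2"] sin_cos_squared_add[of y] by (simp add: power2_eq_square algebra_simps)
  also have "\<dots> \<le> 4 * (y/2)^2"
    using abs_sin_x_le_abs_x[of "y/2"] abs_le_square_iff by (metis mult_left_mono zero_le_numeral)
  also have "\<dots> = \<bar>y\<bar>^2" by (simp add: power2_eq_square)
  finally show ?thesis by (rule power2_le_imp_le) simp
qed

text \<open>\<open>-\<i>/10\<close> and \<open>\<i>\<close> are the poles at \<open>t = \<pi>/2\<close>; the second lies on the unit circle, and
  \<open>\<i> e\<^sup>i\<^sup>x = 1\<close> at \<open>x = 3\<pi>/2\<close>.\<close>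
lemma two_pole_limit_profile:
  assumes x: "3*pi/2 < x" "x \<le> 3*pi/2 + 1"
  shows "1 - \<i> * exp (\<i> * of_real x) \<noteq> 0" and "1 / (x - 3*pi/2) \<le> norm (two_pole (- \<i>/10) \<i> x)"
proof -
  define y where "y = x - 3*pi/2"
  have y: "0 < y" "y \<le> 1" using x by (auto simp: y_def)
  have "cos (3*pi/2) = 0" "sin (3*pi/2) = -1"
    using cos_periodic_pi[of "pi/2"] sin_periodic_pi[of "pi/2"] by (simp_all add: algebra_simps)
  then have "cis (- (3*pi/2)) = \<i>" by (simp add: complex_eq_iff)
  moreover have "exp (\<i> * of_real y) = exp (\<i> * of_real x) * cis (- (3*pi/2))"
    by (simp add: y_def cis_conv_exp exp_add[symmetric] algebra_simps)
  ultimately have shift: "\<i> * exp (\<i> * of_real x) = exp (\<i> * of_real y)"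
    by (simp add: mult.commute)
  have "cos y < 1" using cos_monotone_0_pi[of 0 y] y pi_gt3 by simp
  then have "Re (1 - exp (\<i> * of_real y)) > 0" by (simp flip: cis_conv_exp)
  then have nz: "1 - exp (\<i> * of_real y) \<noteq> 0" by auto
  then show "1 - \<i> * exp (\<i> * of_real x) \<noteq> 0" unfolding shift .
  have "1 / y \<le> 1 / norm (1 - exp (\<i> * of_real y))"
    using norm_one_minus_exp_le[of y] y nz by (intro divide_left_mono) auto
  also have "\<dots> = norm (geom_kernel \<i> x)"
    by (simp add: geom_kernel_def shift norm_divide)
  finally have "1 / y \<le> norm (geom_kernel \<i> x)" .
  moreover have "norm (geom_kernel (- \<i>/10) x) \<le> 1/9"
    using norm_geom_kernel_le[of "- \<i>/10" x] by (simp add: norm_divide)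
  moreover have "norm (2 * geom_kernel \<i> x) \<le> norm (two_pole (- \<i>/10) \<i> x) + norm (2 * geom_kernel (- \<i>/10) x)"
    using norm_triangle_ineq4[of "two_pole (- \<i>/10) \<i> x" "2 * geom_kernel (- \<i>/10) x"]
    by (simp add: two_pole_def)
  moreover have "1 \<le> 1 / y" using y by simp
  ultimately show "1 / (x - 3*pi/2) \<le> norm (two_pole (- \<i>/10) \<i> x)"
    unfolding y_def[symmetric] by (simp add: norm_mult)
qed

lemma blowup_solution_tendsto_profile:
  assumes "3*pi/2 < x" "x \<le> 3*pi/2 + 1"
  shows "((\<lambda>t. blowup_solution t x) \<longlongrightarrow> two_pole (- \<i>/10) \<i> x) (at_left (pi/2))"
  unfolding blowup_solution_def two_pole_def geom_kernel_def
  using poles_tendsto_at_pi_half two_pole_limit_profile(1)[OF assms] geom_kernel_denom_nonzero[of "- \<i>/10" x]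
  by (intro tendsto_intros) (auto simp: norm_divide)

lemma nn_integral_limit_profile_diverges:
  assumes "q \<ge> 1"
  shows "(\<integral>\<^sup>+x. ennreal (norm (two_pole (- \<i>/10) \<i> x) powr q) * indicator {3*pi/2<..3*pi/2+1} x \<partial>lborel) = \<infinity>"
proof -
  have "ennreal (1 / (x - 3*pi/2)) \<le> ennreal (norm (two_pole (- \<i>/10) \<i> x) powr q)"
    if x: "3*pi/2 < x" "x \<le> 3*pi/2 + 1" for x
  proof (intro ennreal_leI)
    have "1 \<le> 1 / (x - 3*pi/2)" using x by simp
    then have "1 \<le> norm (two_pole (- \<i>/10) \<i> x)"
      using two_pole_limit_profile(2)[OF x] by linarith
    then have "norm (two_pole (- \<i>/10) \<i> x) powr 1 \<le> norm (two_pole (- \<i>/10) \<i> x) powr q"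
      using assms by (intro powr_mono) auto
    then show "1 / (x - 3*pi/2) \<le> norm (two_pole (- \<i>/10) \<i> x) powr q"
      using two_pole_limit_profile(2)[OF x] by simp
  qed
  then have "(\<integral>\<^sup>+x. ennreal (1 / (x - 3*pi/2)) * indicator {3*pi/2<..3*pi/2+1} x \<partial>lborel)
      \<le> (\<integral>\<^sup>+x. ennreal (norm (two_pole (- \<i>/10) \<i> x) powr q) * indicator {3*pi/2<..3*pi/2+1} x \<partial>lborel)"
    by (intro nn_integral_mono) (simp add: indicator_def)
  then show ?thesis
    by (simp add: nn_integral_inverse_diverges top_unique)
qed

lemma blowup_Lp_integral_tendsto_top:
  assumes "q \<ge> 1"
  shows "((\<lambda>t. \<integral>\<^sup>+x. ennreal (norm (blowup_solution t x) powr q) * indicator {0..2*pi} x \<partial>lborel)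
           \<longlongrightarrow> \<infinity>) (at_left (pi/2))"
proof -
  define A where "A = {3*pi/2<..3*pi/2+1}"
  define f where "f t x = ennreal (norm (blowup_solution t x) powr q) * indicator A x" for t x
  define g where "g x = ennreal (norm (two_pole (- \<i>/10) \<i> x) powr q) * indicator A x" for x
  have lim: "((\<lambda>t. integral\<^sup>N lborel (f t)) \<longlongrightarrow> \<infinity>) (at_left (pi/2))"
  proof (rule nn_integral_tendsto_top_at_left[where b = 0 and g = g])
    fix t :: real assume "t \<in> {0<..<pi/2}"
    then have "continuous_on UNIV (blowup_solution t)"
      unfolding blowup_solution_def by (intro continuous_on_two_pole norm_poles_less_one) auto
    then have [measurable]: "blowup_solution t \<in> borel_measurable lborel"
      by (simp add: borel_measurable_continuous_onI measurable_lborel1)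
    show "f t \<in> borel_measurable lborel"
      unfolding f_def A_def by measurable
  next
    have "((\<lambda>t. f t x) \<longlongrightarrow> g x) (at_left (pi/2))" for x
    proof (cases "x \<in> A")
      case True
      then have x: "3*pi/2 < x" "x \<le> 3*pi/2 + 1" by (auto simp: A_def)
      have "two_pole (- \<i>/10) \<i> x \<noteq> 0"
        using two_pole_limit_profile(2)[OF x] x by (auto simp: divide_le_0_iff)
      then show ?thesis
        unfolding f_def g_def using True blowup_solution_tendsto_profile[OF x] by (intro tendsto_intros) auto
    qed (simp add: f_def g_def)
    then show "AE x in lborel. ((\<lambda>t. f t x) \<longlongrightarrow> g x) (at_left (pi/2))"
      by simp
    show "integral\<^sup>N lborel g = \<infinity>"
      unfolding g_def A_def by (rule nn_integral_limit_profile_diverges[OF assms])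
  qed simp
  have le: "integral\<^sup>N lborel (f t)
      \<le> (\<integral>\<^sup>+x. ennreal (norm (blowup_solution t x) powr q) * indicator {0..2*pi} x \<partial>lborel)" for t
    unfolding f_def A_def using pi_gt3
    by (intro nn_integral_mono mult_left_mono) (auto simp: indicator_def)
  show ?thesis
    using le by (intro tendsto_sandwich[OF _ _ lim tendsto_const] always_eventually allI) auto
qed

lemma blowup_Lp_norm_tendsto_top:
  assumes "1 \<le> p"
  shows "((\<lambda>t. Lp_norm p (blowup_solution t)) \<longlongrightarrow> \<infinity>) (at_left (pi/2))"
proof (cases p)
  case (real q)
  then show ?thesis
    using assms Lp_norm_tendsto_top[OF _ blowup_Lp_integral_tendsto_top] by simp
next
  case PInf
  have "((\<lambda>t. \<integral>\<^sup>+x. ennreal (norm (blowup_solution t x)) * indicator {0..2*pi} x \<partial>lborel) \<longlongrightarrow> \<infinity>)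
      (at_left (pi/2))"
    using blowup_Lp_integral_tendsto_top[of 1] by simp
  then show ?thesis
    using Lp_norm_infinity_tendsto_top PInf by simp
qed (use assms in simp)

lemma blowup_FL_norm_tendsto_top:
  assumes "(p = \<infinity> \<and> s > 0) \<or> (\<exists>q. p = ereal q \<and> q > 0 \<and> s \<ge> 0)"
  shows "((\<lambda>t. FL_norm s p (blowup_solution t)) \<longlongrightarrow> \<infinity>) (at_left (pi/2))"
  using assms FL_norm_infinity_tendsto_top[OF _ _ blowup_coeff_eventually_large]
    FL_norm_tendsto_top[OF _ _ _ blowup_coeff_eventually_large]
  by auto

theorem theorem1p2:
  shows "\<exists>(\<phi>::real \<Rightarrow> complex) (tstar::real) (u::real \<Rightarrow> real \<Rightarrow> complex).
           \<phi> \<in> L2_0 \<and> tstar > 0 \<and> is_solution u \<phi> tstar \<and>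
           (\<forall>p::ereal. 1 \<le> p \<longrightarrow> ((\<lambda>t. Lp_norm p (u t)) \<longlongrightarrow> \<infinity>) (at_left tstar)) \<and>
           (\<forall>(s::real) (p::ereal).
              ((p = \<infinity> \<and> s > 1/2) \<or> (\<exists>q::real. p = ereal q \<and> q > 2 \<and> s > 1/2 - 1/q)
               \<or> (p = 2 \<and> s \<ge> 0))
              \<longrightarrow> ((\<lambda>t. FL_norm s p (u t)) \<longlongrightarrow> \<infinity>) (at_left tstar))"
proof (intro exI conjI allI impI)
  show "blowup_solution 0 \<in> L2_0"
    unfolding blowup_solution_def by (intro two_pole_in_L2_0 norm_poles_less_one) simp_all
  show "is_solution blowup_solution (blowup_solution 0) (pi/2)"
    by (rule is_solution_blowup_solution)
  show "((\<lambda>t. Lp_norm p (blowup_solution t)) \<longlongrightarrow> \<infinity>) (at_left (pi/2))" if "1 \<le> p" for p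
    using that by (rule blowup_Lp_norm_tendsto_top)
next
  fix s :: real and p :: ereal
  assume exponents: "(p = \<infinity> \<and> s > 1/2) \<or> (\<exists>q::real. p = ereal q \<and> q > 2 \<and> s > 1/2 - 1/q) \<or> (p = 2 \<and> s \<ge> 0)"
  have "(p = \<infinity> \<and> s > 0) \<or> (\<exists>q. p = ereal q \<and> q > 0 \<and> s \<ge> 0)"
    using exponents
  proof (elim disjE exE conjE)
    fix q :: real assume q: "p = ereal q" "q > 2" "s > 1/2 - 1/q"
    have "1/q < 1/2" using \<open>q > 2\<close> by (simp add: field_simps)
    then have "s \<ge> 0" using q(3) by linarith
    then show ?thesis using q by auto
  qed (auto simp: numeral_eq_ereal)
  then show "((\<lambda>t. FL_norm s p (blowup_solution t)) \<longlongrightarrow> \<infinity>) (at_left (pi/2))"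
    by (rule blowup_FL_norm_tendsto_top)
qed simp

end
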